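(* Let $K$ be a commutative unital ring, $G$ a finite groupoid, and $A=\bigoplus_{g\in G}A_g$ a unital $G$-graded $K$-algebra. Let $B=A\#KG^*$. For $g\in G$ put $$E_g=\bigoplus_{l,k\in G,\ d(k)=r(g)}A_l\#v_k\subseteq B,$$ and define $\beta_g:E_{g^{-1}}\to E_g$ by $\beta_g(a_l\#v_k)=a_l\#v_{kg^{-1}}$ for $a_l\in A_l$. Then $\beta=(\{E_g\}_{g\in G},\{\beta_g\}_{g\in G})$ is an action of $G$ on $B$, and $B=\bigoplus_{e\in G_0}E_e$.
   Context: A groupoid is a small category in which every morphism is invertible; we regard it as the set $G$ of its morphisms with the partial multiplication given by composition. For $g\in G$, $d(g)=g^{-1}g$ and $r(g)=gg^{-1}$ are its domain and range identities. The product $gh$ is defined iff $d(g)=r(h)$, and then $d(gh)=d(h)$, $r(gh)=r(g)$. $G^2=\{(g,h): d(g)=r(h)\}$, and $G_0$ is the set of identities. An action of $G$ on a ring $R$ is a pair $\beta=(\{E_g\}_{g\in G},\{\beta_g\}_{g\in G})$ such that: - each $E_g$ is an ideal of $R$ with $E_g=E_{r(g)}$; - each $\beta_g:E_{g^{-1}}\to E_g$ is a ring isomorphism; - $\beta_e=\mathrm{id}_{E_e}$ for $e\in G_0$; - $\beta_g\beta_h(x)=\beta_{gh}(x)$ for all $(g,h)\in G^2$ and $x\in E_{h^{-1}}$. A $G$-graded $K$-algebra is $A=\bigoplus_{g\in G}A_g$ (a direct sum of $K$-submodules) with $A_gA_h\subseteq A_{gh}$ if $(g,h)\in G^2$ and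 $A_gA_h=0$ otherwise. $KG^*$ is the free $K$-module with basis $\{v_g\}_{g\in G}$ and multiplication $v_gv_h=\delta_{g,h}v_g$, with identity $\sum_g v_g$. It acts on $A$ by $v_h\cdot a=a_h$, the $h$-component of $a$. The weak smash product $A\#KG^*$ is $A\otimes_K KG^*$, with $a\#v_g:=a\otimes v_g$. Its multiplication is $(a\#v_g)(b\#v_h)=a(v_{gh^{-1}}\cdot b)\#v_h$ if $d(g)=d(h)$, and $0$ otherwise. *)

theory Defs
  imports Main
begin

text \<open>A groupoid is given by its set G of morphisms, a multiplication pr
(only meaningful on composable pairs) and an inversion iv.
d g = g^-1 g, r g = g g^-1, and (g,h) is composable iff d g = r h.\<close>

definition gdom :: "('g \<Rightarrow> 'g \<Rightarrow> 'g) \<Rightarrow> ('g \<Rightarrow> 'g) \<Rightarrow> 'g \<Rightarrow> 'g" where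
  "gdom pr iv g = pr (iv g) g"

definition gran :: "('g \<Rightarrow> 'g \<Rightarrow> 'g) \<Rightarrow> ('g \<Rightarrow> 'g) \<Rightarrow> 'g \<Rightarrow> 'g" where
  "gran pr iv g = pr g (iv g)"

definition groupoid :: "'g set \<Rightarrow> ('g \<Rightarrow> 'g \<Rightarrow> 'g) \<Rightarrow> ('g \<Rightarrow> 'g) \<Rightarrow> bool" where
  "groupoid G pr iv \<longleftrightarrow>
     (\<forall>g\<in>G. iv g \<in> G \<and> iv (iv g) = g) \<and>
     (\<forall>g\<in>G. \<forall>h\<in>G. gdom pr iv g = gran pr iv h \<longrightarrow>
        pr g h \<in> G \<and> gdom pr iv (pr g h) = gdom pr iv h \<and> gran pr iv (pr g h) = gran pr iv g) \<and>
     (\<forall>g\<in>G. \<forall>h\<in>G. \<forall>l\<in>G. gdom pr iv g = gran pr iv h \<and> gdom pr iv h = gran pr iv l \<longrightarrow>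
        pr (pr g h) l = pr g (pr h l)) \<and>
     (\<forall>g\<in>G. pr (gran pr iv g) g = g \<and> pr g (gdom pr iv g) = g)"

definition gidents :: "'g set \<Rightarrow> ('g \<Rightarrow> 'g \<Rightarrow> 'g) \<Rightarrow> ('g \<Rightarrow> 'g) \<Rightarrow> 'g set" where
  "gidents G pr iv = gdom pr iv ` G"

definition k_algebra :: "('k::comm_ring_1 \<Rightarrow> 'a::ring_1 \<Rightarrow> 'a) \<Rightarrow> bool" where
  "k_algebra sm \<longleftrightarrow>
     (\<forall>k a b. sm k (a + b) = sm k a + sm k b) \<and>
     (\<forall>k l a. sm (k + l) a = sm k a + sm l a) \<and>
     (\<forall>k l a. sm (k * l) a = sm k (sm l a)) \<and>
     (\<forall>a. sm 1 a = a) \<and>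
     (\<forall>k a b. sm k (a * b) = sm k a * b \<and> sm k (a * b) = a * sm k b)"

definition k_submodule :: "('k \<Rightarrow> 'a::ring_1 \<Rightarrow> 'a) \<Rightarrow> 'a set \<Rightarrow> bool" where
  "k_submodule sm M \<longleftrightarrow> 0 \<in> M \<and> (\<forall>a\<in>M. \<forall>b\<in>M. a + b \<in> M) \<and> (\<forall>k. \<forall>a\<in>M. sm k a \<in> M)"

definition graded_decomp :: "'g set \<Rightarrow> ('g \<Rightarrow> 'a::ring_1 set) \<Rightarrow> 'a \<Rightarrow> ('g \<Rightarrow> 'a) \<Rightarrow> bool" where
  "graded_decomp G Ag a f \<longleftrightarrow> (\<forall>g\<in>G. f g \<in> Ag g) \<and> (\<forall>g. g \<notin> G \<longrightarrow> f g = 0) \<and> a = (\<Sum>g\<in>G. f g)"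

definition graded_algebra ::
  "'g set \<Rightarrow> ('g \<Rightarrow> 'g \<Rightarrow> 'g) \<Rightarrow> ('g \<Rightarrow> 'g) \<Rightarrow> ('k::comm_ring_1 \<Rightarrow> 'a::ring_1 \<Rightarrow> 'a) \<Rightarrow> ('g \<Rightarrow> 'a set) \<Rightarrow> bool" where
  "graded_algebra G pr iv sm Ag \<longleftrightarrow>
     k_algebra sm \<and>
     (\<forall>g\<in>G. k_submodule sm (Ag g)) \<and>
     (\<forall>a. \<exists>!f. graded_decomp G Ag a f) \<and>
     (\<forall>g\<in>G. \<forall>h\<in>G. \<forall>a\<in>Ag g. \<forall>b\<in>Ag h.
        (gdom pr iv g = gran pr iv h \<longrightarrow> a * b \<in> Ag (pr g h)) \<and>
        (gdom pr iv g \<noteq> gran pr iv h \<longrightarrow> a * b = 0))"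

text \<open>The h-component a_h of a, i.e. v_h \<cdot> a.\<close>
definition gcomp :: "'g set \<Rightarrow> ('g \<Rightarrow> 'a::ring_1 set) \<Rightarrow> 'a \<Rightarrow> 'g \<Rightarrow> 'a" where
  "gcomp G Ag a h = (THE f. graded_decomp G Ag a f) h"

text \<open>Since KG^* is free over K with basis (v_g)_(g in G), A \<otimes>_K KG^* is identified with
the functions G \<rightarrow> A (zero outside G); the element x corresponds to \<Sum>_k x(k) # v_k.\<close>

definition smash_carrier :: "'g set \<Rightarrow> ('g \<Rightarrow> 'a::ring_1) set" where
  "smash_carrier G = {x. \<forall>k. k \<notin> G \<longrightarrow> x k = 0}"

definition smash_elem :: "'a::ring_1 \<Rightarrow> 'g \<Rightarrow> ('g \<Rightarrow> 'a)" where
  "smash_elem a g = (\<lambda>k. if k = g then a else 0)"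

definition smash_zero :: "'g \<Rightarrow> 'a::ring_1" where
  "smash_zero = (\<lambda>k. 0)"

definition smash_add :: "('g \<Rightarrow> 'a::ring_1) \<Rightarrow> ('g \<Rightarrow> 'a) \<Rightarrow> ('g \<Rightarrow> 'a)" where
  "smash_add x y = (\<lambda>k. x k + y k)"

definition smash_neg :: "('g \<Rightarrow> 'a::ring_1) \<Rightarrow> ('g \<Rightarrow> 'a)" where
  "smash_neg x = (\<lambda>k. - x k)"

text \<open>Bilinear extension of (a # v_g)(b # v_h) = a (v_(gh^-1) \<cdot> b) # v_h if d g = d h, and 0 otherwise.\<close>
definition smash_mult ::
  "'g set \<Rightarrow> ('g \<Rightarrow> 'g \<Rightarrow> 'g) \<Rightarrow> ('g \<Rightarrow> 'g) \<Rightarrow> ('g \<Rightarrow> 'a::ring_1 set) \<Rightarrow>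
   ('g \<Rightarrow> 'a) \<Rightarrow> ('g \<Rightarrow> 'a) \<Rightarrow> ('g \<Rightarrow> 'a)" where
  "smash_mult G pr iv Ag x y =
     (\<lambda>m. \<Sum>g\<in>G. \<Sum>h\<in>G. if gdom pr iv g = gdom pr iv h
        then smash_elem (x g * gcomp G Ag (y h) (pr g (iv h))) h m else 0)"

definition smash_ideal :: "'g set \<Rightarrow> (('g \<Rightarrow> 'a::ring_1) \<Rightarrow> ('g \<Rightarrow> 'a) \<Rightarrow> ('g \<Rightarrow> 'a)) \<Rightarrow> ('g \<Rightarrow> 'a) set \<Rightarrow> bool" where
  "smash_ideal G mul I \<longleftrightarrow>
     I \<subseteq> smash_carrier G \<and> smash_zero \<in> I \<and>
     (\<forall>x\<in>I. \<forall>y\<in>I. smash_add x y \<in> I) \<and> (\<forall>x\<in>I. smash_neg x \<in> I) \<and>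
     (\<forall>b\<in>smash_carrier G. \<forall>x\<in>I. mul b x \<in> I \<and> mul x b \<in> I)"

definition smash_ring_iso ::
  "(('g \<Rightarrow> 'a::ring_1) \<Rightarrow> ('g \<Rightarrow> 'a) \<Rightarrow> ('g \<Rightarrow> 'a)) \<Rightarrow> (('g \<Rightarrow> 'a) \<Rightarrow> ('g \<Rightarrow> 'a)) \<Rightarrow>
   ('g \<Rightarrow> 'a) set \<Rightarrow> ('g \<Rightarrow> 'a) set \<Rightarrow> bool" where
  "smash_ring_iso mul f I J \<longleftrightarrow>
     bij_betw f I J \<and>
     (\<forall>x\<in>I. \<forall>y\<in>I. f (smash_add x y) = smash_add (f x) (f y) \<and> f (mul x y) = mul (f x) (f y))"

definition groupoid_action ::
  "'g set \<Rightarrow> ('g \<Rightarrow> 'g \<Rightarrow> 'g) \<Rightarrow> ('g \<Rightarrow> 'g) \<Rightarrow> (('g \<Rightarrow> 'a::ring_1) \<Rightarrow> ('g \<Rightarrow> 'a) \<Rightarrow> ('g \<Rightarrow> 'a)) \<Rightarrow>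
   ('g \<Rightarrow> ('g \<Rightarrow> 'a) set) \<Rightarrow> ('g \<Rightarrow> ('g \<Rightarrow> 'a) \<Rightarrow> ('g \<Rightarrow> 'a)) \<Rightarrow> bool" where
  "groupoid_action G pr iv mul E \<beta> \<longleftrightarrow>
     (\<forall>g\<in>G. smash_ideal G mul (E g) \<and> E g = E (gran pr iv g)) \<and>
     (\<forall>g\<in>G. smash_ring_iso mul (\<beta> g) (E (iv g)) (E g)) \<and>
     (\<forall>e\<in>gidents G pr iv. \<forall>x\<in>E e. \<beta> e x = x) \<and>
     (\<forall>g\<in>G. \<forall>h\<in>G. gdom pr iv g = gran pr iv h \<longrightarrow>
        (\<forall>x\<in>E (iv h). \<beta> g (\<beta> h x) = \<beta> (pr g h) x))"

definition smash_E :: "'g set \<Rightarrow> ('g \<Rightarrow> 'g \<Rightarrow> 'g) \<Rightarrow> ('g \<Rightarrow> 'g) \<Rightarrow> 'g \<Rightarrow> ('g \<Rightarrow> 'a::ring_1) set" where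
  "smash_E G pr iv g = {x \<in> smash_carrier G. \<forall>k\<in>G. gdom pr iv k \<noteq> gran pr iv g \<longrightarrow> x k = 0}"

text \<open>beta_g (\<Sum>_k x(k) # v_k) = \<Sum>_k x(k) # v_(k g^-1), the sum over k with d k = r(g^-1) = d g.\<close>
definition smash_beta :: "'g set \<Rightarrow> ('g \<Rightarrow> 'g \<Rightarrow> 'g) \<Rightarrow> ('g \<Rightarrow> 'g) \<Rightarrow> 'g \<Rightarrow> ('g \<Rightarrow> 'a::ring_1) \<Rightarrow> ('g \<Rightarrow> 'a)" where
  "smash_beta G pr iv g x = (\<lambda>m. \<Sum>k\<in>{k\<in>G. gdom pr iv k = gdom pr iv g}. smash_elem (x k) (pr k (iv g)) m)"

definition smash_direct_sum :: "'g set \<Rightarrow> 'g set \<Rightarrow> ('g \<Rightarrow> ('g \<Rightarrow> 'a::ring_1) set) \<Rightarrow> bool" where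
  "smash_direct_sum G I E \<longleftrightarrow>
     (\<forall>e\<in>I. E e \<subseteq> smash_carrier G) \<and>
     (\<forall>x\<in>smash_carrier G. \<exists>!f. (\<forall>e\<in>I. f e \<in> E e) \<and> (\<forall>e. e \<notin> I \<longrightarrow> f e = smash_zero) \<and>
        x = (\<lambda>k. \<Sum>e\<in>I. f e k))"

end

theory Submission
  imports Defs
begin

(* An element of B is a function x : G -> A, and everything reduces to coordinate formulas:
   (beta_g x)(m) = x(m g) if d m = r g (and 0 otherwise), and (x y)(m) is a sum over the
   k with d k = d m whose summands only involve x k and y m.  From these:
   - E_g is a two-sided ideal, because (b x)(m) only depends on x m and (x b)(m) only on
     the x k with d k = d m;
   - beta is multiplicative, because right translation by g is a bijection from
     {a. d a = r g} onto {b. d b = d g} that is compatible with the products in the formula;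
   - beta_e is the identity and beta_g beta_h = beta_(gh) by associativity, so beta_(g^-1)
     is inverse to beta_g, which gives bijectivity;
   - the decomposition into the E_e is x = sum_e (x restricted to {k. d k = e}). *)

section \<open>Elementary groupoid facts\<close>

locale gpd =
  fixes G :: "'g set" and pr :: "'g \<Rightarrow> 'g \<Rightarrow> 'g" and iv :: "'g \<Rightarrow> 'g"
  assumes grp: "groupoid G pr iv"
begin

abbreviation "d \<equiv> gdom pr iv"
abbreviation "r \<equiv> gran pr iv"

lemma iv_in: "g \<in> G \<Longrightarrow> iv g \<in> G"
  using grp unfolding groupoid_def by blast

lemma comp_in: "g \<in> G \<Longrightarrow> h \<in> G \<Longrightarrow> d g = r h \<Longrightarrow> pr g h \<in> G"
  using grp unfolding groupoid_def by blast

lemma d_comp: "g \<in> G \<Longrightarrow> h \<in> G \<Longrightarrow> d g = r h \<Longrightarrow> d (pr g h) = d h"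
  using grp unfolding groupoid_def by blast

lemma r_comp: "g \<in> G \<Longrightarrow> h \<in> G \<Longrightarrow> d g = r h \<Longrightarrow> r (pr g h) = r g"
  using grp unfolding groupoid_def by blast

lemma assoc: "g \<in> G \<Longrightarrow> h \<in> G \<Longrightarrow> l \<in> G \<Longrightarrow> d g = r h \<Longrightarrow> d h = r l \<Longrightarrow>
    pr (pr g h) l = pr g (pr h l)"
  using grp unfolding groupoid_def by blast

lemma d_right: "g \<in> G \<Longrightarrow> pr g (d g) = g"
  using grp unfolding groupoid_def by blast

lemma iv_iv: "g \<in> G \<Longrightarrow> iv (iv g) = g"
  using grp unfolding groupoid_def by blast

lemma d_iv: "g \<in> G \<Longrightarrow> d (iv g) = r g"
  using iv_iv by (simp add: gdom_def gran_def)

lemma r_iv: "g \<in> G \<Longrightarrow> r (iv g) = d g"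
  using iv_iv by (simp add: gdom_def gran_def)

lemma d_in: "g \<in> G \<Longrightarrow> d g \<in> G"
  unfolding gdom_def[of pr iv g] using comp_in[of "iv g" g] iv_in d_iv by simp

lemma r_d: "g \<in> G \<Longrightarrow> r (d g) = d g"
proof -
  assume g: "g \<in> G"
  have "r (pr (iv g) g) = r (iv g)" using r_comp[of "iv g" g] iv_in[OF g] g d_iv by simp
  thus ?thesis using r_iv g by (simp add: gdom_def)
qed

lemma r_r: "g \<in> G \<Longrightarrow> r (r g) = r g"
proof -
  assume g: "g \<in> G"
  have "r (pr g (iv g)) = r g" using r_comp[of g "iv g"] iv_in[OF g] g r_iv by simp
  thus ?thesis by (simp add: gran_def)
qed

lemma cancel_iv_right: "k \<in> G \<Longrightarrow> g \<in> G \<Longrightarrow> d k = d g \<Longrightarrow> pr (pr k (iv g)) g = k"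
proof -
  assume k: "k \<in> G" and g: "g \<in> G" and e: "d k = d g"
  have "pr (pr k (iv g)) g = pr k (pr (iv g) g)"
    using assoc[of k "iv g" g] k g iv_in[OF g] e r_iv d_iv by simp
  also have "\<dots> = pr k (d k)" using e by (simp add: gdom_def)
  also have "\<dots> = k" using d_right k .
  finally show ?thesis .
qed

lemma cancel_right: "m \<in> G \<Longrightarrow> g \<in> G \<Longrightarrow> d m = r g \<Longrightarrow> pr (pr m g) (iv g) = m"
proof -
  assume m: "m \<in> G" and g: "g \<in> G" and e: "d m = r g"
  have "pr (pr m g) (iv g) = pr m (pr g (iv g))"
    using assoc[of m g "iv g"] m g iv_in[OF g] e r_iv by simp
  also have "\<dots> = pr m (d m)" using e by (simp add: gran_def)
  also have "\<dots> = m" using d_right m .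
  finally show ?thesis .
qed

text \<open>The inverse of a product, (a b)^-1 = b^-1 a^-1: both are left inverses of a b,
  and right translation by a b is injective.\<close>
lemma iv_comp:
  assumes a: "a \<in> G" and b: "b \<in> G" and e: "d a = r b"
  shows "iv (pr a b) = pr (iv b) (iv a)"
proof -
  have ab: "pr a b \<in> G" using comp_in a b e by blast
  have ia: "iv a \<in> G" and ib: "iv b \<in> G" using iv_in a b by auto
  have ba: "pr (iv b) (iv a) \<in> G" using comp_in[OF ib ia] d_iv r_iv a b e by simp
  have "pr (pr (iv b) (iv a)) (pr a b) = pr (iv b) (pr (iv a) (pr a b))"
    using assoc[OF ib ia ab] d_iv r_iv a b e r_comp[OF a b e] by simp
  also have "pr (iv a) (pr a b) = pr (pr (iv a) a) b"
    using assoc[OF ia a b] d_iv a e by simp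
  also have "pr (iv a) a = r b" using e by (simp add: gdom_def)
  also have "pr (r b) b = b" using grp b unfolding groupoid_def by blast
  also have "pr (iv b) b = pr (iv (pr a b)) (pr a b)" using d_comp[OF a b e] by (simp add: gdom_def)
  finally have eq: "pr (pr (iv b) (iv a)) (pr a b) = pr (iv (pr a b)) (pr a b)" .
  have "iv (pr a b) = pr (pr (iv (pr a b)) (pr a b)) (iv (pr a b))"
    using cancel_right[OF iv_in[OF ab] ab] d_iv[OF ab] by simp
  also have "\<dots> = pr (iv b) (iv a)"
    using eq cancel_right[OF ba ab] d_comp[OF ib ia] d_iv r_iv a b e r_comp[OF a b e] by simp
  finally show ?thesis .
qed

text \<open>Right translation by g maps the morphisms with domain r g onto those with domain d g; it
  is the reindexing behind the multiplicativity of beta_g.\<close>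
lemma translation_bij:
  assumes g: "g \<in> G"
  shows "bij_betw (\<lambda>a. pr a g) {a\<in>G. d a = r g} {b\<in>G. d b = d g}"
proof (rule bij_betw_byWitness[where f' = "\<lambda>b. pr b (iv g)"])
  show "\<forall>a\<in>{a\<in>G. d a = r g}. pr (pr a g) (iv g) = a" using cancel_right g by auto
  show "\<forall>b\<in>{b\<in>G. d b = d g}. pr (pr b (iv g)) g = b" using cancel_iv_right g by auto
  show "(\<lambda>a. pr a g) ` {a\<in>G. d a = r g} \<subseteq> {b\<in>G. d b = d g}"
    using comp_in d_comp g by auto
  show "(\<lambda>b. pr b (iv g)) ` {b\<in>G. d b = d g} \<subseteq> {a\<in>G. d a = r g}"
    using comp_in[of _ "iv g"] d_comp[of _ "iv g"] iv_in g d_iv r_iv by auto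
qed

lemma translate_quotient:
  assumes a: "a \<in> G" and m: "m \<in> G" and g: "g \<in> G" and da: "d a = r g" and dm: "d m = r g"
  shows "pr (pr a g) (iv (pr m g)) = pr a (iv m)"
proof -
  have ag: "pr a g \<in> G" "d (pr a g) = d g" using comp_in d_comp a g da by auto
  have "pr (pr a g) (iv (pr m g)) = pr (pr a g) (pr (iv g) (iv m))"
    using iv_comp m g dm by simp
  also have "\<dots> = pr (pr (pr a g) (iv g)) (iv m)"
    using assoc[of "pr a g" "iv g" "iv m"] ag iv_in g m d_iv r_iv dm by simp
  also have "\<dots> = pr a (iv m)" using cancel_right a g da by simp
  finally show ?thesis .
qed

section \<open>Coordinates in the smash product\<close>

lemma mem_smash_E: "x \<in> smash_E G pr iv g \<longleftrightarrow> (\<forall>k. (k \<notin> G \<or> d k \<noteq> r g) \<longrightarrow> x k = 0)"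
  unfolding smash_E_def smash_carrier_def by auto

lemma smash_E_r: "g \<in> G \<Longrightarrow> smash_E G pr iv g = smash_E G pr iv (r g)"
  using r_r by (simp add: smash_E_def)

end

locale finite_gpd = gpd G pr iv
  for G :: "'g set" and pr :: "'g \<Rightarrow> 'g \<Rightarrow> 'g" and iv :: "'g \<Rightarrow> 'g" +
  assumes fin: "finite G"
begin

lemma smash_beta_apply:
  assumes g: "g \<in> G"
  shows "smash_beta G pr iv g x m = (if m \<in> G \<and> d m = r g then x (pr m g) else 0)"
proof -
  let ?S = "{k\<in>G. d k = d g}"
  have "smash_beta G pr iv g x m = (\<Sum>k\<in>?S. if m = pr k (iv g) then x k else 0)"
    by (simp add: smash_beta_def smash_elem_def)
  also have "\<dots> = (if m \<in> G \<and> d m = r g then x (pr m g) else 0)"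
  proof (cases "m \<in> G \<and> d m = r g")
    case True
    have "(\<Sum>k\<in>?S. if m = pr k (iv g) then x k else 0) = (\<Sum>k\<in>?S. if k = pr m g then x k else 0)"
    proof (rule sum.cong)
      fix k assume k: "k \<in> ?S"
      have "m = pr k (iv g) \<longleftrightarrow> k = pr m g"
        using cancel_iv_right[of k g] cancel_right[of m g] k g True by auto
      thus "(if m = pr k (iv g) then x k else 0) = (if k = pr m g then x k else 0)" by simp
    qed simp
    also have "\<dots> = x (pr m g)"
      using fin True g comp_in[of m g] d_comp[of m g] by (simp add: sum.delta')
    finally show ?thesis using True by simp
  next
    case False
    have "m \<noteq> pr k (iv g)" if k: "k \<in> ?S" for k
    proof -
      have "pr k (iv g) \<in> G" "d (pr k (iv g)) = r g"
        using comp_in[of k "iv g"] d_comp[of k "iv g"] iv_in[OF g] k g r_iv d_iv by auto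
      thus ?thesis using False by auto
    qed
    hence "(\<Sum>k\<in>?S. if m = pr k (iv g) then x k else 0) = 0" by (intro sum.neutral) auto
    thus ?thesis using False by auto
  qed
  finally show ?thesis .
qed

lemma smash_mult_apply: "smash_mult G pr iv Ag x y m = (if m \<in> G then
   (\<Sum>k\<in>G. if d k = d m then x k * gcomp G Ag (y m) (pr k (iv m)) else 0) else 0)"
proof -
  have "smash_mult G pr iv Ag x y m = (\<Sum>k\<in>G. \<Sum>h\<in>G. if h = m then
      (if d k = d m then x k * gcomp G Ag (y m) (pr k (iv m)) else 0) else 0)"
    unfolding smash_mult_def smash_elem_def by (rule sum.cong, simp, rule sum.cong, auto)
  also have "\<dots> = (\<Sum>k\<in>G. if m \<in> G then
      (if d k = d m then x k * gcomp G Ag (y m) (pr k (iv m)) else 0) else 0)"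
    using fin by (simp add: sum.delta')
  finally show ?thesis by simp
qed

text \<open>E_g is a two-sided ideal of B.  The only property of the component maps needed is
  that the components of 0 vanish.\<close>
lemma smash_E_ideal:
  fixes Ag :: "'g \<Rightarrow> 'b::ring_1 set"
  assumes g: "g \<in> G" and gcomp_0: "\<And>h. gcomp G Ag 0 h = 0"
  shows "smash_ideal G (smash_mult G pr iv Ag) (smash_E G pr iv g)"
  unfolding smash_ideal_def
proof (intro conjI ballI)
  show "smash_E G pr iv g \<subseteq> smash_carrier G" by (auto simp: smash_E_def)
  show "smash_zero \<in> smash_E G pr iv g" by (simp add: mem_smash_E smash_zero_def)
  fix x :: "'g \<Rightarrow> 'b" assume x: "x \<in> smash_E G pr iv g"
  show "smash_neg x \<in> smash_E G pr iv g" using x by (simp add: mem_smash_E smash_neg_def)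
  show "smash_add x y \<in> smash_E G pr iv g" if "y \<in> smash_E G pr iv g" for y
    using x that by (simp add: mem_smash_E smash_add_def)
  fix b
  text \<open>(b x)(k) only involves x k, which vanishes off the support.\<close>
  show "smash_mult G pr iv Ag b x \<in> smash_E G pr iv g"
    using x gcomp_0 by (auto simp: mem_smash_E smash_mult_apply intro!: sum.neutral)
  text \<open>(x b)(k) only involves the x l with d l = d k, which vanish off the support.\<close>
  have "\<forall>l\<in>G. (if d l = d k then x l * gcomp G Ag (b k) (pr l (iv k)) else 0) = 0"
    if "d k \<noteq> r g" for k
    using x that by (auto simp: mem_smash_E)
  thus "smash_mult G pr iv Ag x b \<in> smash_E G pr iv g"
    by (auto simp: mem_smash_E smash_mult_apply)
qed

section \<open>The maps beta_g\<close>

lemma smash_beta_range: "g \<in> G \<Longrightarrow> smash_beta G pr iv g x \<in> smash_E G pr iv g"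
  by (auto simp: mem_smash_E smash_beta_apply)

lemma smash_beta_add:
  "g \<in> G \<Longrightarrow> smash_beta G pr iv g (smash_add x y) =
     smash_add (smash_beta G pr iv g x) (smash_beta G pr iv g y)"
  by (auto simp: smash_beta_apply smash_add_def)

text \<open>beta_g is multiplicative on all of B: after translating the support, the sum defining a
  product coordinate is reindexed along the translation bijection.\<close>
lemma smash_beta_mult:
  assumes g: "g \<in> G"
  shows "smash_beta G pr iv g (smash_mult G pr iv Ag x y) =
         smash_mult G pr iv Ag (smash_beta G pr iv g x) (smash_beta G pr iv g y)"
proof
  fix m
  show "smash_beta G pr iv g (smash_mult G pr iv Ag x y) m =
        smash_mult G pr iv Ag (smash_beta G pr iv g x) (smash_beta G pr iv g y) m"
  proof (cases "m \<in> G \<and> d m = r g")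
    case False
    thus ?thesis using g by (auto simp: smash_beta_apply smash_mult_apply intro!: sum.neutral)
  next
    case True
    hence m: "m \<in> G" and dm: "d m = r g" by auto
    have mg: "pr m g \<in> G" "d (pr m g) = d g" using comp_in d_comp m g dm by auto
    define F where "F b = x b * gcomp G Ag (y (pr m g)) (pr b (iv (pr m g)))" for b
    have "smash_mult G pr iv Ag (smash_beta G pr iv g x) (smash_beta G pr iv g y) m =
      (\<Sum>a\<in>G. if d a = r g then F (pr a g) else 0)"
      using m dm g translate_quotient
      by (auto simp: smash_beta_apply smash_mult_apply F_def intro!: sum.cong)
    also have "\<dots> = (\<Sum>a\<in>{a\<in>G. d a = r g}. F (pr a g))"
      by (simp add: sum.inter_filter fin)
    also have "\<dots> = (\<Sum>b\<in>{b\<in>G. d b = d g}. F b)"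
      using sum.reindex_bij_betw[OF translation_bij[OF g]] .
    also have "\<dots> = smash_beta G pr iv g (smash_mult G pr iv Ag x y) m"
      using True g mg by (simp add: smash_beta_apply smash_mult_apply sum.inter_filter fin F_def)
    finally show ?thesis by simp
  qed
qed

lemma smash_beta_ident:
  assumes e: "e \<in> gidents G pr iv" and x: "x \<in> smash_E G pr iv e"
  shows "smash_beta G pr iv e x = x"
proof
  fix m
  obtain g where g: "g \<in> G" and eg: "e = d g" using e by (auto simp: gidents_def)
  have eG: "e \<in> G" and re: "r e = e" using d_in r_d g eg by auto
  show "smash_beta G pr iv e x m = x m"
  proof (cases "m \<in> G \<and> d m = r e")
    case True
    hence "pr m e = m" using d_right re by metis
    thus ?thesis using True eG by (simp add: smash_beta_apply)
  next
    case False thus ?thesis using x eG by (auto simp: smash_beta_apply mem_smash_E)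
  qed
qed

text \<open>beta_g beta_h = beta_(gh), by associativity (m g) h = m (g h).\<close>
lemma smash_beta_comp:
  assumes g: "g \<in> G" and h: "h \<in> G" and e: "d g = r h"
  shows "smash_beta G pr iv g (smash_beta G pr iv h x) = smash_beta G pr iv (pr g h) x"
proof
  fix m
  have gh: "pr g h \<in> G" "r (pr g h) = r g" using comp_in r_comp g h e by auto
  show "smash_beta G pr iv g (smash_beta G pr iv h x) m = smash_beta G pr iv (pr g h) x m"
  proof (cases "m \<in> G \<and> d m = r g")
    case True
    have "pr m g \<in> G" "d (pr m g) = r h" using comp_in d_comp True g e by auto
    moreover have "pr (pr m g) h = pr m (pr g h)" using assoc True g h e by auto
    ultimately show ?thesis using True g h gh by (simp add: smash_beta_apply)
  next
    case False thus ?thesis using g gh by (auto simp: smash_beta_apply)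
  qed
qed

text \<open>beta_g is a ring isomorphism E_(g^-1) -> E_g, with inverse beta_(g^-1): by the two
  previous lemmas the composites are beta_(d g) on E_(d g) and beta_(r g) on E_(r g).\<close>
lemma smash_beta_iso:
  fixes Ag :: "'g \<Rightarrow> 'b::ring_1 set"
  assumes g: "g \<in> G"
  shows "smash_ring_iso (smash_mult G pr iv Ag) (smash_beta G pr iv g)
           (smash_E G pr iv (iv g)) (smash_E G pr iv g)"
  unfolding smash_ring_iso_def
proof (intro conjI ballI)
  have ig: "iv g \<in> G" using iv_in g .
  have dg: "d g \<in> gidents G pr iv" and rg: "r g \<in> gidents G pr iv"
    using g image_eqI[of "r g" d "iv g" G] ig d_iv by (auto simp: gidents_def)
  show "bij_betw (smash_beta G pr iv g) (smash_E G pr iv (iv g)) (smash_E G pr iv g)"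
  proof (rule bij_betw_byWitness[where f' = "smash_beta G pr iv (iv g)"])
    show "\<forall>a\<in>smash_E G pr iv (iv g). smash_beta G pr iv (iv g) (smash_beta G pr iv g a) = a"
    proof
      fix a assume "a \<in> smash_E G pr iv (iv g)"
      hence "a \<in> smash_E G pr iv (d g)" using smash_E_r[OF ig] r_iv[OF g] by metis
      thus "smash_beta G pr iv (iv g) (smash_beta G pr iv g a) = a"
        by (simp add: smash_beta_comp[OF ig g d_iv[OF g]] smash_beta_ident[OF dg] gdom_def[symmetric])
    qed
    show "\<forall>a\<in>smash_E G pr iv g. smash_beta G pr iv g (smash_beta G pr iv (iv g) a) = a"
    proof
      fix a assume "a \<in> smash_E G pr iv g"
      hence "a \<in> smash_E G pr iv (r g)" using smash_E_r[OF g] by metis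
      thus "smash_beta G pr iv g (smash_beta G pr iv (iv g) a) = a"
        by (simp add: smash_beta_comp[OF g ig r_iv[OF g, symmetric]] smash_beta_ident[OF rg] gran_def[symmetric])
    qed
    show "smash_beta G pr iv g ` smash_E G pr iv (iv g) \<subseteq> smash_E G pr iv g"
      using smash_beta_range g by auto
    show "smash_beta G pr iv (iv g) ` smash_E G pr iv g \<subseteq> smash_E G pr iv (iv g)"
      using smash_beta_range ig by auto
  qed
  fix x y :: "'g \<Rightarrow> 'b"
  show "smash_beta G pr iv g (smash_add x y) =
        smash_add (smash_beta G pr iv g x) (smash_beta G pr iv g y)"
    using smash_beta_add g .
  show "smash_beta G pr iv g (smash_mult G pr iv Ag x y) =
        smash_mult G pr iv Ag (smash_beta G pr iv g x) (smash_beta G pr iv g y)"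
    using smash_beta_mult g .
qed

section \<open>B as the direct sum of the E_e\<close>

text \<open>Every x in B decomposes uniquely as the sum of its restrictions to the fibres
  {k. d k = e} of the domain map, and the restriction to the fibre over e lies in E_e.\<close>
lemma smash_direct_sum_fibres: "smash_direct_sum G (gidents G pr iv) (smash_E G pr iv)"
  unfolding smash_direct_sum_def
proof (intro conjI ballI)
  let ?I = "gidents G pr iv"
  have I_fin: "finite ?I" using fin by (simp add: gidents_def)
  have I_r: "r e = e" if "e \<in> ?I" for e using that r_d by (auto simp: gidents_def)
  have d_I: "d k \<in> ?I" if "k \<in> G" for k using that by (auto simp: gidents_def)
  show "smash_E G pr iv e \<subseteq> smash_carrier G" for e by (auto simp: smash_E_def)
  fix x :: "'g \<Rightarrow> 'b::ring_1" assume x: "x \<in> smash_carrier G"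
  define decomp where "decomp f \<longleftrightarrow> (\<forall>e\<in>?I. f e \<in> smash_E G pr iv e) \<and>
    (\<forall>e. e \<notin> ?I \<longrightarrow> f e = smash_zero)" for f :: "'g \<Rightarrow> 'g \<Rightarrow> 'b"
  have supp: "f e k = 0" if "decomp f" "\<not> (k \<in> G \<and> d k = e)" for f e k
    using that I_r by (cases "e \<in> ?I") (auto simp: decomp_def mem_smash_E smash_zero_def)
  have sum_at: "(\<Sum>e\<in>?I. f e k) = (if k \<in> G then f (d k) k else 0)" if "decomp f" for f k
  proof -
    have "(\<Sum>e\<in>?I. f e k) = (\<Sum>e\<in>?I. if e = d k then f e k else 0)"
      using supp[OF that] by (intro sum.cong) auto
    thus ?thesis using I_fin d_I supp[OF that] by (auto simp: sum.delta')
  qed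
  define part where "part e = (if e \<in> ?I then (\<lambda>k. if k \<in> G \<and> d k = e then x k else 0)
    else smash_zero)" for e
  have part: "decomp part" using I_r by (auto simp: decomp_def part_def mem_smash_E)
  have "x k = (\<Sum>e\<in>?I. part e k)" for k
    unfolding sum_at[OF part] using x d_I by (auto simp: part_def smash_carrier_def)
  hence x_part: "x = (\<lambda>k. \<Sum>e\<in>?I. part e k)" by blast
  show "\<exists>!f. (\<forall>e\<in>?I. f e \<in> smash_E G pr iv e) \<and> (\<forall>e. e \<notin> ?I \<longrightarrow> f e = smash_zero) \<and>
        x = (\<lambda>k. \<Sum>e\<in>?I. f e k)"
  proof (rule ex1I[where a = part])
    show "(\<forall>e\<in>?I. part e \<in> smash_E G pr iv e) \<and> (\<forall>e. e \<notin> ?I \<longrightarrow> part e = smash_zero) \<and>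
        x = (\<lambda>k. \<Sum>e\<in>?I. part e k)"
      using part x_part by (simp add: decomp_def)
  next
    fix f assume "(\<forall>e\<in>?I. f e \<in> smash_E G pr iv e) \<and> (\<forall>e. e \<notin> ?I \<longrightarrow> f e = smash_zero) \<and>
        x = (\<lambda>k. \<Sum>e\<in>?I. f e k)"
    hence f: "decomp f" and x_f: "x = (\<lambda>k. \<Sum>e\<in>?I. f e k)" by (auto simp: decomp_def)
    show "f = part"
    proof (intro ext)
      fix e k
      show "f e k = part e k"
      proof (cases "k \<in> G \<and> d k = e")
        case True
        hence "f e k = x k" using sum_at[OF f] x_f by simp
        thus ?thesis using True d_I by (auto simp: part_def)
      next
        case False thus ?thesis using supp[OF f] supp[OF part] by simp
      qed
    qed
  qed
qed

end

text \<open>In a graded algebra the components of 0 are 0, by uniqueness of the decomposition.\<close>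
lemma gcomp_zero:
  assumes "graded_algebra G pr iv sm Ag"
  shows "gcomp G Ag 0 h = 0"
proof -
  have unique: "\<exists>!f. graded_decomp G Ag 0 f" using assms by (simp add: graded_algebra_def)
  have "graded_decomp G Ag 0 (\<lambda>_. 0)"
    using assms by (auto simp: graded_decomp_def graded_algebra_def k_submodule_def)
  hence "(THE f. graded_decomp G Ag 0 f) = (\<lambda>_. 0)" using the1_equality[OF unique] by blast
  thus ?thesis by (simp add: gcomp_def)
qed

theorem proposition2p4:
  fixes G :: "'g set" and pr :: "'g \<Rightarrow> 'g \<Rightarrow> 'g" and iv :: "'g \<Rightarrow> 'g"
    and sm :: "'k::comm_ring_1 \<Rightarrow> 'a::ring_1 \<Rightarrow> 'a" and Ag :: "'g \<Rightarrow> 'a set"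
  assumes "groupoid G pr iv" and "finite G"
    and "graded_algebra G pr iv sm Ag"
  shows "groupoid_action G pr iv (smash_mult G pr iv Ag) (smash_E G pr iv) (smash_beta G pr iv)
       \<and> smash_direct_sum G (gidents G pr iv) (smash_E G pr iv)"
proof -
  interpret finite_gpd G pr iv using assms by (simp add: finite_gpd_def gpd_def finite_gpd_axioms_def)
  have "smash_ideal G (smash_mult G pr iv Ag) (smash_E G pr iv g)" if "g \<in> G" for g
    using smash_E_ideal[OF that gcomp_zero[OF assms(3)]] .
  thus ?thesis
    unfolding groupoid_action_def
    using smash_E_r smash_beta_iso smash_beta_ident smash_beta_comp smash_direct_sum_fibres
    by blast
qed

end
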